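(* Let $X$ be a geodesic metric space, $Y$ a quasi-geodesic metric space and $f:Y\to X$ a quasi-isometric embedding. Then $Y$ is stable in $X$ in the sense of Durham--Taylor if and only if $f(Y)$ is $N$-stable as a subspace of $X$ for some Morse gauge $N$.
   Context: $Y$ is quasi-geodesic if there are $K\ge1,C\ge0$ such that any two points of $Y$ are joined by a $(K,C)$-quasi-geodesic in $Y$. $Y$ is stable in $X$ in the sense of Durham--Taylor (with respect to $f$) if for all $K,C$ there is $R=R(K,C)$ such that any two $(K,C)$-quasi-geodesics in $X$ with common endpoints in $f(Y)$ are at Hausdorff distance less than $R$. A Morse gauge is a function $N$ assigning to each $(K,C)$ a number $N(K,C)\ge0$; a geodesic $\gamma$ is $N$-Morse if every $(K,C)$-quasi-geodesic with endpoints on $\gamma$ lies in the $N(K,C)$-neighbourhood of $\gamma$. A subset $Z\subseteq X$ is $N$-stable if it is quasi-convex and any two points of $Z$ are joined by a geodesic of $X$ which is $N$-Morse. *)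

theory Defs
  imports "HOL-Analysis.Analysis"
begin

definition geodesic_seg :: "(real \<Rightarrow> 'a::metric_space) \<Rightarrow> real \<Rightarrow> 'a \<Rightarrow> 'a \<Rightarrow> bool" where
  "geodesic_seg g L a b \<longleftrightarrow> L \<ge> 0 \<and> g 0 = a \<and> g L = b \<and>
     (\<forall>s\<in>{0..L}. \<forall>t\<in>{0..L}. dist (g s) (g t) = \<bar>s - t\<bar>)"

definition geodesic_space :: "'a::metric_space itself \<Rightarrow> bool" where
  "geodesic_space _ \<longleftrightarrow> (\<forall>x y::'a. \<exists>g L. geodesic_seg g L x y)"

definition quasi_geodesic :: "real \<Rightarrow> real \<Rightarrow> (real \<Rightarrow> 'a::metric_space) \<Rightarrow> real \<Rightarrow> real \<Rightarrow> bool" where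
  "quasi_geodesic K C q a b \<longleftrightarrow> a \<le> b \<and>
     (\<forall>s\<in>{a..b}. \<forall>t\<in>{a..b}. \<bar>s - t\<bar> / K - C \<le> dist (q s) (q t) \<and>
                               dist (q s) (q t) \<le> K * \<bar>s - t\<bar> + C)"

definition quasi_geodesic_space :: "'a::metric_space itself \<Rightarrow> bool" where
  "quasi_geodesic_space _ \<longleftrightarrow> (\<exists>K C. K \<ge> 1 \<and> C \<ge> 0 \<and>
     (\<forall>x y::'a. \<exists>q a b. quasi_geodesic K C q a b \<and> q a = x \<and> q b = y))"

definition qi_embedding :: "('b::metric_space \<Rightarrow> 'a::metric_space) \<Rightarrow> bool" where
  "qi_embedding f \<longleftrightarrow> (\<exists>K C. K \<ge> 1 \<and> C \<ge> 0 \<and>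
     (\<forall>x y. dist x y / K - C \<le> dist (f x) (f y) \<and> dist (f x) (f y) \<le> K * dist x y + C))"

definition hausdorff_dist :: "'a::metric_space set \<Rightarrow> 'a set \<Rightarrow> real" where
  "hausdorff_dist A B = max (SUP a\<in>A. infdist a B) (SUP b\<in>B. infdist b A)"

definition DT_stable :: "('b::metric_space \<Rightarrow> 'a::metric_space) \<Rightarrow> bool" where
  "DT_stable f \<longleftrightarrow> (\<forall>K C. K \<ge> 1 \<longrightarrow> C \<ge> 0 \<longrightarrow> (\<exists>R.
     \<forall>q1 a1 b1 q2 a2 b2. quasi_geodesic K C q1 a1 b1 \<longrightarrow> quasi_geodesic K C q2 a2 b2 \<longrightarrow>
        q1 a1 \<in> range f \<longrightarrow> q1 b1 \<in> range f \<longrightarrow> q2 a2 = q1 a1 \<longrightarrow> q2 b2 = q1 b1 \<longrightarrow>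
        hausdorff_dist (q1 ` {a1..b1}) (q2 ` {a2..b2}) < R))"

definition morse_gauge :: "(real \<Rightarrow> real \<Rightarrow> real) \<Rightarrow> bool" where
  "morse_gauge N \<longleftrightarrow> (\<forall>K C. K \<ge> 1 \<longrightarrow> C \<ge> 0 \<longrightarrow> N K C \<ge> 0)"

definition N_morse :: "(real \<Rightarrow> real \<Rightarrow> real) \<Rightarrow> (real \<Rightarrow> 'a::metric_space) \<Rightarrow> real \<Rightarrow> bool" where
  "N_morse N g L \<longleftrightarrow> (\<forall>K C q a b. K \<ge> 1 \<longrightarrow> C \<ge> 0 \<longrightarrow> quasi_geodesic K C q a b \<longrightarrow>
       q a \<in> g ` {0..L} \<longrightarrow> q b \<in> g ` {0..L} \<longrightarrow>
       (\<forall>t\<in>{a..b}. infdist (q t) (g ` {0..L}) \<le> N K C))"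

definition quasi_convex :: "'a::metric_space set \<Rightarrow> bool" where
  "quasi_convex Z \<longleftrightarrow> (\<exists>k\<ge>0. \<forall>x\<in>Z. \<forall>y\<in>Z. \<forall>g L. geodesic_seg g L x y \<longrightarrow>
       (\<forall>t\<in>{0..L}. infdist (g t) Z \<le> k))"

definition N_stable :: "(real \<Rightarrow> real \<Rightarrow> real) \<Rightarrow> 'a::metric_space set \<Rightarrow> bool" where
  "N_stable N Z \<longleftrightarrow> quasi_convex Z \<and>
     (\<forall>x\<in>Z. \<forall>y\<in>Z. \<exists>g L. geodesic_seg g L x y \<and> N_morse N g L)"

end

theory Submission
  imports Defs
begin

text \<open>If f(Y) is N-stable, two (K,C)-quasi-geodesics with endpoints in f(Y) both stay
  N(K,C)-close to the N-Morse geodesic joining these endpoints, and that geodesic in turn stays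
  close to each of them, which bounds their Hausdorff distance. Conversely, DT-stability compares
  a geodesic between points of f(Y) with the f-image of a quasi-geodesic of Y, which gives
  quasi-convexity; and a quasi-geodesic with endpoints on such a geodesic becomes, after moving
  its endpoints into the nearby set f(Y), fellow-travelling with the corresponding subsegment of
  the geodesic, which gives a uniform Morse gauge.\<close>

lemma infdist_less_iff:
  assumes "A \<noteq> {}"
  shows "infdist x A < e \<longleftrightarrow> (\<exists>a\<in>A. dist x a < e)"
proof -
  have "bdd_below ((\<lambda>a. dist x a) ` A)" by (rule bdd_belowI[of _ 0]) auto
  then show ?thesis using assms by (simp add: infdist_notempty cINF_less_iff)
qed

lemma infdist_le_infdist_plus:
  assumes "\<forall>w\<in>B. infdist w A \<le> D" "B \<noteq> {}"
  shows "infdist y A \<le> infdist y B + D"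
proof -
  have "infdist y A - D \<le> (INF w\<in>B. dist y w)"
  proof (rule cINF_greatest)
    fix w assume "w \<in> B"
    have "infdist y A \<le> infdist w A + dist y w" by (rule infdist_triangle)
    then show "infdist y A - D \<le> dist y w" using assms(1) \<open>w \<in> B\<close> by auto
  qed (use assms in auto)
  then show ?thesis using assms(2) by (simp add: infdist_notempty)
qed

lemma infdist_le_hausdorff_dist:
  assumes "bounded A" "B \<noteq> {}" "a \<in> A"
  shows "infdist a B \<le> hausdorff_dist A B"
proof -
  obtain b where b: "b \<in> B" using assms(2) by auto
  obtain e where e: "\<forall>y\<in>A. dist b y \<le> e" using assms(1) by (auto simp: bounded_any_center[of _ b])
  have "bdd_above ((\<lambda>x. infdist x B) ` A)"
  proof (rule bdd_aboveI2)
    fix x assume "x \<in> A"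
    then show "infdist x B \<le> e" using e b by (intro infdist_le2) (auto simp: dist_commute)
  qed
  then have "infdist a B \<le> (SUP x\<in>A. infdist x B)" using assms(3) by (rule cSUP_upper2) auto
  then show ?thesis unfolding hausdorff_dist_def by linarith
qed

lemma hausdorff_dist_le:
  assumes "A \<noteq> {}" "B \<noteq> {}" "\<forall>a\<in>A. infdist a B \<le> D" "\<forall>b\<in>B. infdist b A \<le> D"
  shows "hausdorff_dist A B \<le> D"
  unfolding hausdorff_dist_def using assms by (simp add: cSUP_least)

lemma quasi_geodesic_bounded:
  assumes "quasi_geodesic K C q a b"
  shows "bounded (q ` {a..b})"
proof -
  have "dist (q a) (q s) \<le> \<bar>K\<bar> * (b - a) + C" if "s \<in> {a..b}" for s
  proof -
    have "a \<in> {a..b}" using that by auto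
    then have "dist (q a) (q s) \<le> K * \<bar>a - s\<bar> + C"
      using assms that unfolding quasi_geodesic_def by blast
    also have "\<dots> \<le> \<bar>K\<bar> * (b - a) + C"
    proof -
      have "K * \<bar>a - s\<bar> \<le> \<bar>K\<bar> * \<bar>a - s\<bar>" by (simp add: mult_right_mono)
      also have "\<dots> \<le> \<bar>K\<bar> * (b - a)" using that by (intro mult_left_mono) auto
      finally show ?thesis by simp
    qed
    finally show ?thesis .
  qed
  then show ?thesis unfolding bounded_any_center[of _ "q a"] by blast
qed

lemma isometry_imp_quasi_geodesic:
  assumes "\<forall>s\<in>{a..b}. \<forall>t\<in>{a..b}. dist (g s) (g t) = \<bar>s - t\<bar>" "a \<le> b" "K \<ge> 1" "C \<ge> 0"
  shows "quasi_geodesic K C g a b"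
  unfolding quasi_geodesic_def
proof (intro conjI ballI)
  fix s t assume st: "s \<in> {a..b}" "t \<in> {a..b}"
  have "\<bar>s - t\<bar> \<le> K * \<bar>s - t\<bar>" using assms(3) by (simp add: mult_le_cancel_right1)
  moreover have "\<bar>s - t\<bar> / K \<le> \<bar>s - t\<bar>" using assms(3) by (simp add: divide_le_eq mult_le_cancel_left1)
  ultimately show "\<bar>s - t\<bar> / K - C \<le> dist (g s) (g t)" "dist (g s) (g t) \<le> K * \<bar>s - t\<bar> + C"
    using assms(1,4) st by auto
qed (use assms in auto)

lemma geodesic_seg_imp_quasi_geodesic:
  assumes "geodesic_seg g L x y" "K \<ge> 1" "C \<ge> 0"
  shows "quasi_geodesic K C g 0 L"
  using assms unfolding geodesic_seg_def by (intro isometry_imp_quasi_geodesic) auto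

lemma geodesic_seg_subsegment:
  assumes gs: "geodesic_seg g L x y" and s: "s \<in> {0..L}" and t: "t \<in> {0..L}"
  obtains \<rho> where "geodesic_seg \<rho> \<bar>t - s\<bar> (g s) (g t)" "\<rho> ` {0..\<bar>t - s\<bar>} \<subseteq> g ` {0..L}"
proof
  define \<rho> where "\<rho> = (\<lambda>v. g (s + sgn (t - s) * v))"
  have mem: "s + sgn (t - s) * v \<in> {0..L}" if "v \<in> {0..\<bar>t - s\<bar>}" for v
    using s t that by (cases "s < t"; cases "t < s") auto
  show "\<rho> ` {0..\<bar>t - s\<bar>} \<subseteq> g ` {0..L}" unfolding \<rho>_def using mem by auto
  have "dist (\<rho> v) (\<rho> w) = \<bar>v - w\<bar>" if "v \<in> {0..\<bar>t - s\<bar>}" "w \<in> {0..\<bar>t - s\<bar>}" for v w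
  proof -
    have "dist (\<rho> v) (\<rho> w) = \<bar>sgn (t - s) * (v - w)\<bar>"
      using gs mem[OF that(1)] mem[OF that(2)] unfolding \<rho>_def geodesic_seg_def
      by (simp add: algebra_simps)
    also have "\<dots> = \<bar>v - w\<bar>" using that by (cases "s = t") (auto simp: abs_mult abs_sgn_eq)
    finally show ?thesis .
  qed
  moreover have "\<rho> \<bar>t - s\<bar> = g t" unfolding \<rho>_def by (simp add: sgn_mult_abs)
  ultimately show "geodesic_seg \<rho> \<bar>t - s\<bar> (g s) (g t)"
    unfolding geodesic_seg_def \<rho>_def by auto
qed

lemma quasi_geodesic_perturb:
  assumes "quasi_geodesic K C q a b" "\<forall>u\<in>{a..b}. dist (q' u) (q u) \<le> D"
  shows "quasi_geodesic K (C + 2 * D) q' a b"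
  unfolding quasi_geodesic_def
proof (intro conjI ballI)
  show "a \<le> b" using assms unfolding quasi_geodesic_def by auto
  fix s t assume st: "s \<in> {a..b}" "t \<in> {a..b}"
  have q: "\<bar>s - t\<bar> / K - C \<le> dist (q s) (q t)" "dist (q s) (q t) \<le> K * \<bar>s - t\<bar> + C"
    using assms(1) st unfolding quasi_geodesic_def by auto
  have "dist (q' s) (q s) \<le> D" "dist (q' t) (q t) \<le> D" using assms(2) st by auto
  moreover have "dist (q' s) (q' t) \<le> dist (q' s) (q s) + dist (q s) (q t) + dist (q t) (q' t)"
    "dist (q s) (q t) \<le> dist (q s) (q' s) + dist (q' s) (q' t) + dist (q' t) (q t)"
    by (metis add_right_mono dist_triangle order_trans)+
  ultimately show "\<bar>s - t\<bar> / K - (C + 2 * D) \<le> dist (q' s) (q' t)"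
    "dist (q' s) (q' t) \<le> K * \<bar>s - t\<bar> + (C + 2 * D)"
    using q by (simp_all add: dist_commute)
qed

lemma quasi_geodesic_move_endpoints:
  assumes q: "quasi_geodesic K C q a b" and pa: "dist (q a) p \<le> D" and pb: "dist (q b) p' \<le> D"
    and degenerate: "a = b \<Longrightarrow> p = p'"
  obtains q' where "quasi_geodesic K (C + 2 * D) q' a b" "q' a = p" "q' b = p'"
    "\<forall>v\<in>{a..b}. dist (q' v) (q v) \<le> D"
proof
  define q' where "q' = (\<lambda>v. if v = a then p else if v = b then p' else q v)"
  have "0 \<le> D" using pa zero_le_dist order_trans by blast
  then show close: "\<forall>v\<in>{a..b}. dist (q' v) (q v) \<le> D"
    using pa pb unfolding q'_def by (auto simp: dist_commute)
  show "quasi_geodesic K (C + 2 * D) q' a b" by (rule quasi_geodesic_perturb[OF q close])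
  show "q' a = p" "q' b = p'" unfolding q'_def using degenerate by auto
qed

lemma quasi_geodesic_comp:
  fixes f :: "'b::metric_space \<Rightarrow> 'a::metric_space"
  assumes Kf: "Kf \<ge> 1" and Cf: "Cf \<ge> 0"
    and fq: "\<forall>x y. dist x y / Kf - Cf \<le> dist (f x) (f y) \<and> dist (f x) (f y) \<le> Kf * dist x y + Cf"
    and q: "quasi_geodesic K C q a b" and K: "K \<ge> 1" and C: "C \<ge> 0"
  shows "quasi_geodesic (Kf * K) (Kf * C + Cf) (f \<circ> q) a b"
  unfolding quasi_geodesic_def
proof (intro conjI ballI)
  show "a \<le> b" using q unfolding quasi_geodesic_def by auto
  fix s t assume st: "s \<in> {a..b}" "t \<in> {a..b}"
  have ql: "\<bar>s - t\<bar> / K - C \<le> dist (q s) (q t)" and qu: "dist (q s) (q t) \<le> K * \<bar>s - t\<bar> + C"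
    using q st unfolding quasi_geodesic_def by auto
  have fl: "dist (q s) (q t) / Kf - Cf \<le> dist (f (q s)) (f (q t))"
    and fu: "dist (f (q s)) (f (q t)) \<le> Kf * dist (q s) (q t) + Cf" using fq by auto
  have "Kf * dist (q s) (q t) \<le> Kf * (K * \<bar>s - t\<bar> + C)" using qu Kf by (intro mult_left_mono) auto
  then show "dist ((f \<circ> q) s) ((f \<circ> q) t) \<le> Kf * K * \<bar>s - t\<bar> + (Kf * C + Cf)"
    using fu by (simp add: algebra_simps)
  have "(\<bar>s - t\<bar> / K - C) / Kf \<le> dist (q s) (q t) / Kf" using ql Kf by (intro divide_right_mono) auto
  moreover have "(\<bar>s - t\<bar> / K - C) / Kf = \<bar>s - t\<bar> / (Kf * K) - C / Kf"
    using Kf K by (simp add: field_simps)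
  moreover have "C / Kf \<le> C" using Kf C by (simp add: divide_le_eq mult_le_cancel_left1)
  moreover have "C \<le> Kf * C" using Kf C by (simp add: mult_le_cancel_right1)
  ultimately show "\<bar>s - t\<bar> / (Kf * K) - (Kf * C + Cf) \<le> dist ((f \<circ> q) s) ((f \<circ> q) t)"
    using fl by simp
qed

text \<open>Quasi-geodesics need not be continuous, so instead of the intermediate value theorem we
  take the supremum of the parameters of q that are R-related to a point of g before t.\<close>
lemma straddling_parameters:
  fixes R :: "real \<Rightarrow> real \<Rightarrow> bool"
  assumes ab: "a \<le> b" and t: "t \<in> {0..L}" and Ra: "R a 0" and Rb: "R b L" and \<epsilon>: "\<epsilon> > 0"
    and cover: "\<And>u. u \<in> {a..b} \<Longrightarrow> \<exists>s\<in>{0..L}. R u s"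
  obtains u1 s1 u2 s2 where "u1 \<in> {a..b}" "s1 \<in> {0..L}" "s1 \<le> t" "R u1 s1"
    "u2 \<in> {a..b}" "s2 \<in> {0..L}" "t \<le> s2" "R u2 s2" "\<bar>u2 - u1\<bar> < \<epsilon>"
proof -
  define S where "S = {u \<in> {a..b}. \<exists>s\<in>{0..L}. s \<le> t \<and> R u s}"
  define us where "us = Sup S"
  have aS: "a \<in> S" unfolding S_def using ab t Ra by auto
  have Sbd: "bdd_above S" unfolding S_def by (rule bdd_aboveI[of _ b]) auto
  have us: "a \<le> us" "us \<le> b" unfolding us_def using aS Sbd
    by (auto intro: cSup_upper cSup_least simp: S_def)
  obtain u1 where u1: "u1 \<in> S" "us - \<epsilon> / 2 < u1"
    using less_cSupE[of "us - \<epsilon> / 2" S] aS \<epsilon> unfolding us_def by auto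
  have "u1 \<le> us" unfolding us_def using u1(1) Sbd by (rule cSup_upper)
  obtain s1 where s1: "u1 \<in> {a..b}" "s1 \<in> {0..L}" "s1 \<le> t" "R u1 s1"
    using u1(1) unfolding S_def by auto
  show ?thesis
  proof (cases "us = b")
    case True
    then show ?thesis using that[OF s1, of b L] ab t Rb u1(2) \<open>u1 \<le> us\<close> \<epsilon> by auto
  next
    case False
    define u2 where "u2 = min b (us + \<epsilon> / 2)"
    have u2: "u2 \<in> {a..b}" "us < u2" using us False \<epsilon> unfolding u2_def by auto
    then have "u2 \<notin> S" using Sbd cSup_upper[of u2 S] unfolding us_def by auto
    obtain s2 where s2: "s2 \<in> {0..L}" "R u2 s2" using cover[OF u2(1)] by auto
    with \<open>u2 \<notin> S\<close> u2(1) have "\<not> s2 \<le> t" unfolding S_def by blast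
    then have "t \<le> s2" by simp
    moreover have "\<bar>u2 - u1\<bar> < \<epsilon>" using u1(2) \<open>u1 \<le> us\<close> u2(2) unfolding u2_def by auto
    ultimately show ?thesis using that[OF s1 u2(1) s2(1)] s2(2) by auto
  qed
qed

lemma geodesic_near_quasi_geodesic:
  assumes gs: "geodesic_seg g L x y" and q: "quasi_geodesic K C q a b" and K: "K \<ge> 0"
    and qa: "q a = g 0" and qb: "q b = g L"
    and near: "\<And>u. u \<in> {a..b} \<Longrightarrow> \<exists>s\<in>{0..L}. dist (q u) (g s) < M"
    and t: "t \<in> {0..L}"
  shows "infdist (g t) (q ` {a..b}) \<le> 3 * M + K + C"
proof -
  have ab: "a \<le> b" using q unfolding quasi_geodesic_def by auto
  have iso: "\<And>s r. s \<in> {0..L} \<Longrightarrow> r \<in> {0..L} \<Longrightarrow> dist (g s) (g r) = \<bar>s - r\<bar>"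
    using gs unfolding geodesic_seg_def by auto
  have "M > 0" using near[of a] ab by (auto intro: le_less_trans[OF zero_le_dist])
  obtain u1 s1 u2 s2 where u1: "u1 \<in> {a..b}" "s1 \<in> {0..L}" "s1 \<le> t" "dist (q u1) (g s1) < M"
    and u2: "u2 \<in> {a..b}" "s2 \<in> {0..L}" "t \<le> s2" "dist (q u2) (g s2) < M" and "\<bar>u2 - u1\<bar> < 1"
    by (rule straddling_parameters[of a b t L "\<lambda>u s. dist (q u) (g s) < M" 1])
      (use \<open>M > 0\<close> ab t qa qb near in auto)
  have "dist (q u1) (q u2) \<le> K * \<bar>u1 - u2\<bar> + C" using q u1(1) u2(1) unfolding quasi_geodesic_def by auto
  also have "\<dots> \<le> K + C" using \<open>\<bar>u2 - u1\<bar> < 1\<close> K mult_left_le[of "\<bar>u1 - u2\<bar>" K] by auto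
  finally have d12: "dist (q u1) (q u2) \<le> K + C" .
  have "t - s1 \<le> s2 - s1" using u2(3) by simp
  also have "\<dots> = dist (g s1) (g s2)" using iso[OF u1(2) u2(2)] u1(3) u2(3) by auto
  also have "\<dots> \<le> dist (g s1) (q u1) + dist (q u1) (q u2) + dist (q u2) (g s2)"
    by (metis add_right_mono dist_triangle order_trans)
  finally have "t - s1 < 2 * M + K + C" using u1(4) u2(4) d12 by (simp add: dist_commute)
  have "infdist (g t) (q ` {a..b}) \<le> dist (g t) (q u1)" using u1(1) by (intro infdist_le) auto
  also have "\<dots> \<le> dist (g t) (g s1) + dist (g s1) (q u1)" by (rule dist_triangle)
  finally show ?thesis using iso[OF t u1(2)] u1(3,4) \<open>t - s1 < 2 * M + K + C\<close>
    by (simp add: dist_commute)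
qed

lemma quasi_geodesics_near_Morse_geodesic:
  assumes gs: "geodesic_seg g L x y" and Morse: "N_morse N g L" and K: "K \<ge> 1" and C: "C \<ge> 0"
    and p: "quasi_geodesic K C p c d" "p c = g 0" "p d = g L"
    and p': "quasi_geodesic K C p' c' d'" "p' c' = g 0" "p' d' = g L"
    and u: "u \<in> {c..d}"
  shows "infdist (p u) (p' ` {c'..d'}) \<le> N K C + (3 * (N K C + 1) + K + C)"
proof -
  have L: "L \<ge> 0" using gs unfolding geodesic_seg_def by auto
  have Morse_bound: "infdist (r v) (g ` {0..L}) \<le> N K C"
    if "quasi_geodesic K C r e e'" "r e = g 0" "r e' = g L" "v \<in> {e..e'}" for r e e' v
    using Morse K C that L unfolding N_morse_def by (metis atLeastAtMost_iff image_eqI order_refl)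
  have near: "\<exists>s\<in>{0..L}. dist (p' v) (g s) < N K C + 1" if "v \<in> {c'..d'}" for v
  proof -
    have "infdist (p' v) (g ` {0..L}) < N K C + 1" using Morse_bound[OF p' that] by linarith
    then show ?thesis using L by (subst (asm) infdist_less_iff) auto
  qed
  have "infdist (g s) (p' ` {c'..d'}) \<le> 3 * (N K C + 1) + K + C" if "s \<in> {0..L}" for s
    using geodesic_near_quasi_geodesic[OF gs p'(1) _ p'(2,3) near that] K by simp
  then have "\<forall>w\<in>g ` {0..L}. infdist w (p' ` {c'..d'}) \<le> 3 * (N K C + 1) + K + C" by auto
  then have "infdist (p u) (p' ` {c'..d'}) \<le> infdist (p u) (g ` {0..L}) + (3 * (N K C + 1) + K + C)"
    using L by (intro infdist_le_infdist_plus) auto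
  then show ?thesis using Morse_bound[OF p u] by linarith
qed

definition DT_constant :: "('b::metric_space \<Rightarrow> 'a::metric_space) \<Rightarrow> real \<Rightarrow> real \<Rightarrow> real \<Rightarrow> bool" where
  "DT_constant f K C R \<longleftrightarrow> (\<forall>q1 a1 b1 q2 a2 b2.
     quasi_geodesic K C q1 a1 b1 \<longrightarrow> quasi_geodesic K C q2 a2 b2 \<longrightarrow>
     q1 a1 \<in> range f \<longrightarrow> q1 b1 \<in> range f \<longrightarrow> q2 a2 = q1 a1 \<longrightarrow> q2 b2 = q1 b1 \<longrightarrow>
     hausdorff_dist (q1 ` {a1..b1}) (q2 ` {a2..b2}) < R)"

lemma DT_stable_iff_DT_constant:
  "DT_stable f \<longleftrightarrow> (\<forall>K C. K \<ge> 1 \<longrightarrow> C \<ge> 0 \<longrightarrow> (\<exists>R. DT_constant f K C R))"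
  unfolding DT_stable_def DT_constant_def by simp

lemma DT_constantD:
  assumes "DT_constant f K C R" "quasi_geodesic K C q1 a1 b1" "quasi_geodesic K C q2 a2 b2"
    "q1 a1 \<in> range f" "q1 b1 \<in> range f" "q2 a2 = q1 a1" "q2 b2 = q1 b1"
  shows "hausdorff_dist (q1 ` {a1..b1}) (q2 ` {a2..b2}) < R"
  using assms unfolding DT_constant_def by blast

lemma N_stable_imp_DT_stable:
  assumes "N_stable N (range f)"
  shows "DT_stable f"
  unfolding DT_stable_iff_DT_constant
proof (intro allI impI)
  fix K C :: real assume K: "K \<ge> 1" and C: "C \<ge> 0"
  define D where "D = N K C + (3 * (N K C + 1) + K + C)"
  have "DT_constant f K C (D + 1)"
    unfolding DT_constant_def
  proof (intro allI impI)
    fix q1 q2 :: "real \<Rightarrow> 'a" and a1 b1 a2 b2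
    assume q1: "quasi_geodesic K C q1 a1 b1" and q2: "quasi_geodesic K C q2 a2 b2"
      and "q1 a1 \<in> range f" "q1 b1 \<in> range f" and e: "q2 a2 = q1 a1" "q2 b2 = q1 b1"
    then obtain g L where gs: "geodesic_seg g L (q1 a1) (q1 b1)" and Morse: "N_morse N g L"
      using assms unfolding N_stable_def by blast
    have ends: "g 0 = q1 a1" "g L = q1 b1" using gs unfolding geodesic_seg_def by auto
    have "a1 \<le> b1" "a2 \<le> b2" using q1 q2 unfolding quasi_geodesic_def by auto
    moreover note quasi_geodesics_near_Morse_geodesic[OF gs Morse K C, folded D_def]
    ultimately have "hausdorff_dist (q1 ` {a1..b1}) (q2 ` {a2..b2}) \<le> D"
      using q1 q2 ends e by (intro hausdorff_dist_le) auto
    then show "hausdorff_dist (q1 ` {a1..b1}) (q2 ` {a2..b2}) < D + 1" by simp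
  qed
  then show "\<exists>R. DT_constant f K C R" by blast
qed

lemma DT_stable_geodesics_near_range:
  fixes f :: "'b::metric_space \<Rightarrow> 'a::metric_space"
  assumes qgs: "quasi_geodesic_space TYPE('b)" and qi: "qi_embedding f" and DT: "DT_stable f"
  obtains R where "\<And>g L x y r. geodesic_seg g L x y \<Longrightarrow> x \<in> range f \<Longrightarrow> y \<in> range f \<Longrightarrow>
    r \<in> {0..L} \<Longrightarrow> infdist (g r) (range f) \<le> R"
proof -
  obtain Kf Cf where Kf: "Kf \<ge> 1" and Cf: "Cf \<ge> 0"
    and fq: "\<forall>x y. dist x y / Kf - Cf \<le> dist (f x) (f y) \<and> dist (f x) (f y) \<le> Kf * dist x y + Cf"
    using qi unfolding qi_embedding_def by blast
  obtain KY CY where KY: "KY \<ge> 1" and CY: "CY \<ge> 0"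
    and yq: "\<forall>x y::'b. \<exists>q a b. quasi_geodesic KY CY q a b \<and> q a = x \<and> q b = y"
    using qgs unfolding quasi_geodesic_space_def by blast
  define K where "K = Kf * KY"
  define C where "C = Kf * CY + Cf"
  have K: "K \<ge> 1" unfolding K_def using Kf KY by (metis mult_mono' mult_1 order_trans zero_le_one)
  have C: "C \<ge> 0" unfolding C_def using Kf Cf CY by simp
  obtain R where R: "DT_constant f K C R" using DT K C unfolding DT_stable_iff_DT_constant by blast
  show ?thesis
  proof (rule that)
    fix g :: "real \<Rightarrow> 'a" and L x y r
    assume gs: "geodesic_seg g L x y" and "x \<in> range f" "y \<in> range f" and r: "r \<in> {0..L}"
    then obtain y1 y2 where y1: "x = f y1" and y2: "y = f y2" by auto
    obtain q a b where q: "quasi_geodesic KY CY q a b" "q a = y1" "q b = y2" using yq by blast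
    have fq_geodesic: "quasi_geodesic K C (f \<circ> q) a b"
      unfolding K_def C_def by (rule quasi_geodesic_comp[OF Kf Cf fq q(1) KY CY])
    have ends: "g 0 = x" "g L = y" using gs unfolding geodesic_seg_def by auto
    have gq: "quasi_geodesic K C g 0 L" by (rule geodesic_seg_imp_quasi_geodesic[OF gs K C])
    have "a \<le> b" using q(1) unfolding quasi_geodesic_def by auto
    have "infdist (g r) (range f) \<le> infdist (g r) ((f \<circ> q) ` {a..b})"
      using \<open>a \<le> b\<close> by (intro infdist_mono) auto
    also have "\<dots> \<le> hausdorff_dist (g ` {0..L}) ((f \<circ> q) ` {a..b})"
      using \<open>a \<le> b\<close> r by (intro infdist_le_hausdorff_dist quasi_geodesic_bounded[OF gq]) auto
    also have "\<dots> < R"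
      using DT_constantD[OF R gq fq_geodesic] ends q y1 y2 \<open>x \<in> range f\<close> \<open>y \<in> range f\<close> by auto
    finally show "infdist (g r) (range f) \<le> R" by simp
  qed
qed

text \<open>Morse property: replace the endpoints of a quasi-geodesic with endpoints on g, and those of
  the corresponding subsegment of g, by nearby points of f(Y); DT-stability applies to the two
  resulting quasi-geodesics.\<close>
lemma DT_constant_geodesic_Morse:
  fixes f :: "'b::metric_space \<Rightarrow> 'a::metric_space"
  assumes Rf: "\<And>K C. K \<ge> 1 \<Longrightarrow> C \<ge> 0 \<Longrightarrow> DT_constant f K C (Rf K C)"
    and gs: "geodesic_seg g L x y" and near: "\<And>r. r \<in> {0..L} \<Longrightarrow> infdist (g r) (range f) < D"
  shows "N_morse (\<lambda>K C. max 0 (Rf K (C + 2 * D)) + 2 * D) g L"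
  unfolding N_morse_def
proof (intro allI impI ballI)
  fix K C q a b u
  assume K: "K \<ge> 1" and C: "C \<ge> 0" and q: "quasi_geodesic K C q a b"
    and "q a \<in> g ` {0..L}" "q b \<in> g ` {0..L}" and u: "u \<in> {a..b}"
  then obtain s t where s: "s \<in> {0..L}" "q a = g s" and t: "t \<in> {0..L}" "q b = g t" by auto
  let ?G = "g ` {0..L}"
  have iso: "\<And>v w. v \<in> {0..L} \<Longrightarrow> w \<in> {0..L} \<Longrightarrow> dist (g v) (g w) = \<bar>v - w\<bar>"
    using gs unfolding geodesic_seg_def by auto
  have "\<forall>r\<in>{0..L}. \<exists>p\<in>range f. dist (g r) p \<le> D"
    using near by (simp add: infdist_less_iff) (metis atLeastAtMost_iff less_imp_le)
  then obtain pf where pf: "\<And>r. r \<in> {0..L} \<Longrightarrow> pf r \<in> range f \<and> dist (g r) (pf r) \<le> D"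
    by metis
  have D: "D \<ge> 0" using pf[OF s(1)] zero_le_dist order_trans by blast
  have ps: "dist (g s) (pf s) \<le> D" and pt: "dist (g t) (pf t) \<le> D" using pf s(1) t(1) by auto
  have "dist (q a) (pf s) \<le> D" "dist (q b) (pf t) \<le> D" using ps pt s(2) t(2) by simp_all
  moreover have "pf s = pf t" if "a = b"
    using iso[OF s(1) t(1)] s(2) t(2) that by simp
  ultimately obtain q' where q': "quasi_geodesic K (C + 2 * D) q' a b" "q' a = pf s" "q' b = pf t"
    and q'_close: "\<forall>v\<in>{a..b}. dist (q' v) (q v) \<le> D"
    using quasi_geodesic_move_endpoints[OF q] by blast
  obtain \<rho> where \<rho>: "geodesic_seg \<rho> \<bar>t - s\<bar> (g s) (g t)" and \<rho>G: "\<rho> ` {0..\<bar>t - s\<bar>} \<subseteq> ?G"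
    using geodesic_seg_subsegment[OF gs s(1) t(1)] .
  have \<rho>_ends: "\<rho> 0 = g s" "\<rho> \<bar>t - s\<bar> = g t" using \<rho> unfolding geodesic_seg_def by blast+
  have "dist (\<rho> 0) (pf s) \<le> D" "dist (\<rho> \<bar>t - s\<bar>) (pf t) \<le> D" using ps pt \<rho>_ends by simp_all
  moreover have "pf s = pf t" if "0 = \<bar>t - s\<bar>" using that by simp
  ultimately obtain \<rho>' where \<rho>': "quasi_geodesic K (C + 2 * D) \<rho>' 0 \<bar>t - s\<bar>" "\<rho>' 0 = pf s" "\<rho>' \<bar>t - s\<bar> = pf t"
    and \<rho>'_close: "\<forall>v\<in>{0..\<bar>t - s\<bar>}. dist (\<rho>' v) (\<rho> v) \<le> D"
    using quasi_geodesic_move_endpoints[OF geodesic_seg_imp_quasi_geodesic[OF \<rho> K C]] by blast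
  let ?P = "\<rho>' ` {0..\<bar>t - s\<bar>}"
  have P_near_G: "\<forall>w\<in>?P. infdist w ?G \<le> D"
  proof
    fix w assume "w \<in> ?P"
    then obtain v where v: "v \<in> {0..\<bar>t - s\<bar>}" "w = \<rho>' v" by auto
    then have "\<rho> v \<in> ?G" using \<rho>G by auto
    then show "infdist w ?G \<le> D" using \<rho>'_close v by (intro infdist_le2) auto
  qed
  have "C + 2 * D \<ge> 0" using C D by simp
  have "infdist (q u) ?G \<le> infdist (q' u) ?G + dist (q u) (q' u)" by (rule infdist_triangle)
  also have "\<dots> \<le> infdist (q' u) ?P + D + D"
  proof -
    have "dist (q u) (q' u) \<le> D" using q'_close u by (simp add: dist_commute)
    then show ?thesis using infdist_le_infdist_plus[OF P_near_G, of "q' u"] by simp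
  qed
  also have "\<dots> \<le> hausdorff_dist (q' ` {a..b}) ?P + 2 * D"
    using infdist_le_hausdorff_dist[OF quasi_geodesic_bounded[OF q'(1)], of ?P "q' u"] u by simp
  also have "\<dots> < Rf K (C + 2 * D) + 2 * D"
    using DT_constantD[OF Rf[OF K \<open>C + 2 * D \<ge> 0\<close>] q'(1) \<rho>'(1)] q'(2,3) \<rho>'(2,3)
      pf[OF s(1)] pf[OF t(1)] by simp
  finally show "infdist (q u) ?G \<le> max 0 (Rf K (C + 2 * D)) + 2 * D" by simp
qed

lemma DT_stable_imp_N_stable:
  fixes f :: "'b::metric_space \<Rightarrow> 'a::metric_space"
  assumes geo: "geodesic_space TYPE('a)" and qgs: "quasi_geodesic_space TYPE('b)"
    and qi: "qi_embedding f" and DT: "DT_stable f"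
  shows "\<exists>N. morse_gauge N \<and> N_stable N (range f)"
proof -
  obtain Rf where Rf: "\<And>K C. K \<ge> 1 \<Longrightarrow> C \<ge> 0 \<Longrightarrow> DT_constant f K C (Rf K C)"
    using DT unfolding DT_stable_iff_DT_constant by metis
  obtain R where R: "\<And>g L x y r. geodesic_seg g L x y \<Longrightarrow> x \<in> range f \<Longrightarrow> y \<in> range f \<Longrightarrow>
      r \<in> {0..L} \<Longrightarrow> infdist (g r) (range f) \<le> R"
    using DT_stable_geodesics_near_range[OF qgs qi DT] by blast
  define D where "D = max 0 R + 1"
  define N where "N = (\<lambda>K C. max 0 (Rf K (C + 2 * D)) + 2 * D)"
  have "morse_gauge N" unfolding morse_gauge_def N_def D_def by auto
  moreover have "quasi_convex (range f)"
    unfolding quasi_convex_def by (intro exI[of _ "max 0 R"]) (auto intro!: order_trans[OF R])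
  moreover have "\<exists>g L. geodesic_seg g L x y \<and> N_morse N g L" if "x \<in> range f" "y \<in> range f" for x y
  proof -
    obtain g L where gs: "geodesic_seg g L x y" using geo unfolding geodesic_space_def by blast
    have "infdist (g r) (range f) < D" if "r \<in> {0..L}" for r
      using R[OF gs \<open>x \<in> range f\<close> \<open>y \<in> range f\<close> that] unfolding D_def by linarith
    then show ?thesis unfolding N_def using DT_constant_geodesic_Morse[OF Rf gs] gs by blast
  qed
  ultimately show ?thesis unfolding N_stable_def by blast
qed

theorem lemma3p8:
  fixes f :: "'b::metric_space \<Rightarrow> 'a::metric_space"
  assumes "geodesic_space TYPE('a)"
    and "quasi_geodesic_space TYPE('b)"
    and "qi_embedding f"
  shows "DT_stable f \<longleftrightarrow> (\<exists>N. morse_gauge N \<and> N_stable N (range f))"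
  using DT_stable_imp_N_stable[OF assms] N_stable_imp_DT_stable by blast

end
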